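(* Let $0<d<\pi/2$, $\mathscr{D}_d=\{\zeta\in\mathbb{C}:|\Im\zeta|<d\}$, $\mathscr{D}_d^{-}=\{\zeta\in\mathscr{D}_d:\Re\zeta<0\}$, $\mathscr{D}_d^{+}=\{\zeta\in\mathscr{D}_d:\Re\zeta\ge0\}$. Assume $f$ is analytic on $\sinh(\mathscr{D}_d)$ and there are constants $K,\alpha,\beta>0$ with $|f(z)|\le K|1+z^2|^{-(\alpha+1)/2}$ for all $z\in\sinh(\mathscr{D}_d^-)$ and $|f(z)|\le K|1+z^2|^{-(\beta+1)/2}$ for all $z\in\sinh(\mathscr{D}_d^+)$. Let $\mu=\min\{\alpha,\beta\}$, $\nu=\max\{\alpha,\beta\}$. Then $F(\zeta)=f(\sinh\zeta)\cosh\zeta$ belongs to $\mathbf{L}^{\mathrm{SE}}_{L,R,\alpha,\beta}(\mathscr{D}_d)$ with $L=2^{\nu}K/(\cos d)^{(\nu-\mu)/2}$ and $R=2^{\nu}K$.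
   Context: For positive $L,R,\alpha,\beta$ and $0<d<\pi/2$, $\mathbf{L}^{\mathrm{SE}}_{L,R,\alpha,\beta}(\mathscr{D}_d)$ is the set of functions $F$ analytic on $\mathscr{D}_d$ such that for all $\zeta\in\mathscr{D}_d$, $|F(\zeta)|\le L\,|1+e^{-2\zeta}|^{-\alpha/2}|1+e^{2\zeta}|^{-\beta/2}$, and for all $x\in\mathbb{R}$, $|F(x)|\le R\,(1+e^{-2x})^{-\alpha/2}(1+e^{2x})^{-\beta/2}$. *)

theory Defs
  imports "HOL-Analysis.Analysis"
begin

definition strip :: "real \<Rightarrow> complex set" where
  "strip d = {z. \<bar>Im z\<bar> < d}"

definition LSE :: "real \<Rightarrow> real \<Rightarrow> real \<Rightarrow> real \<Rightarrow> real \<Rightarrow> (complex \<Rightarrow> complex) set" where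
  "LSE L R \<alpha> \<beta> d = {F. F analytic_on strip d \<and>
     (\<forall>\<zeta>\<in>strip d. norm (F \<zeta>) \<le> L * norm (1 + exp (-2*\<zeta>)) powr (-\<alpha>/2) * norm (1 + exp (2*\<zeta>)) powr (-\<beta>/2)) \<and>
     (\<forall>x::real. norm (F (complex_of_real x)) \<le> R * (1 + exp (-2*x)) powr (-\<alpha>/2) * (1 + exp (2*x)) powr (-\<beta>/2))}"

end

theory Submission
  imports Defs
begin

text \<open>
  Put c = |cosh z| and x = Re z. Since 1 + sinh(z)^2 = cosh(z)^2 and |1 + exp(\<plusminus>2z)| = 2 c exp(\<plusminus>x),
  on the left half-strip the hypothesis gives |F z| \<le> K c^(-\<alpha>), while the target weight equals
  2^(-(\<alpha>+\<beta>)/2) c^(-\<alpha>) u^((\<alpha>-\<beta>)/2) with u = c exp x. For x \<le> 0 one has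
  cos(Im z)/2 \<le> u \<le> 1, so u^((\<beta>-\<alpha>)/2) \<le> (2 / cos d)^(|\<alpha>-\<beta>|/2), which is the constant L.
  The right half-strip reduces to the left one by z \<mapsto> -z, which swaps \<alpha> and \<beta>;
  on the real line cos(Im z) = 1 gives R.
\<close>

lemma one_le_powr_abs_mult_powr:
  fixes a u t :: real
  assumes "0 < a" "a \<le> u" "u \<le> 1"
  shows "1 \<le> a powr (- \<bar>t\<bar>) * u powr t"
proof (cases "0 \<le> t")
  case True
  have "1 \<le> (u / a) powr t" using assms True by (intro ge_one_powr_ge_zero) auto
  then show ?thesis using assms True by (simp add: powr_divide powr_minus_divide)
next
  case False
  have "a * u \<le> 1" using assms mult_mono[of a 1 u 1] by simp
  then have "1 \<le> (1 / (a * u)) powr (- t)" using assms False by (intro ge_one_powr_ge_zero) auto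
  then show ?thesis using assms False by (simp add: powr_divide powr_minus_divide powr_mult)
qed

lemma powr_uminus_le_weight:
  fixes c cd x p q :: real
  assumes "0 < c" "0 < cd" "cd / 2 \<le> c * exp x" "c * exp x \<le> 1"
  shows "c powr (-p) \<le> 2 powr (max p q) / cd powr ((max p q - min p q) / 2)
           * ((2 * c * exp (-x)) powr (-p/2) * (2 * c * exp x) powr (-q/2))"
proof -
  define u where "u = c * exp x"
  have u: "0 < u" using assms(1) by (simp add: u_def)
  have weight: "(2 * c * exp (-x)) powr (-p/2) * (2 * c * exp x) powr (-q/2)
      = 2 powr (-(p+q)/2) * c powr (-p) * u powr ((p-q)/2)"
    using assms(1) u by (simp add: u_def powr_def ln_mult field_simps flip: exp_add)
  have prefactor: "2 powr (max p q) / cd powr ((max p q - min p q) / 2) * 2 powr (-(p+q)/2)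
      = (cd / 2) powr (- \<bar>(p-q)/2\<bar>)"
  proof -
    define s where "s = \<bar>(p-q)/2\<bar>"
    have exponents: "max p q + -(p+q)/2 = s" "(max p q - min p q) / 2 = s"
      by (simp_all add: s_def max_def min_def abs_if field_simps)
    then have "2 powr (max p q) * 2 powr (-(p+q)/2) = 2 powr s"
      by (simp only: powr_add[symmetric])
    then have "2 powr (max p q) / cd powr ((max p q - min p q) / 2) * 2 powr (-(p+q)/2)
        = 2 powr s / cd powr s"
      using exponents(2) by (simp add: mult.commute)
    also have "\<dots> = (cd / 2) powr (- s)"
      using assms(2) by (simp add: powr_divide powr_minus_divide)
    finally show ?thesis by (simp only: s_def)
  qed
  have "c powr (-p) \<le> c powr (-p) * ((cd / 2) powr (- \<bar>(p-q)/2\<bar>) * u powr ((p-q)/2))"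
    using one_le_powr_abs_mult_powr[of "cd/2" u "(p-q)/2"] assms
    by (simp add: u_def mult_le_cancel_left1)
  also have "\<dots> = (2 powr (max p q) / cd powr ((max p q - min p q) / 2) * 2 powr (-(p+q)/2))
                    * (c powr (-p) * u powr ((p-q)/2))"
    unfolding prefactor by (simp only: mult_ac)
  also have "\<dots> = 2 powr (max p q) / cd powr ((max p q - min p q) / 2)
           * ((2 * c * exp (-x)) powr (-p/2) * (2 * c * exp x) powr (-q/2))"
    unfolding weight by (simp only: mult_ac)
  finally show ?thesis .
qed

lemma norm_one_plus_exp_double:
  fixes \<zeta> :: complex
  shows "norm (1 + exp (2 * \<zeta>)) = 2 * norm (cosh \<zeta>) * exp (Re \<zeta>)"
proof -
  have "exp (2 * \<zeta>) = exp \<zeta> * exp \<zeta>" by (metis exp_add mult_2)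
  then have "1 + exp (2 * \<zeta>) = 2 * exp \<zeta> * cosh \<zeta>"
    by (simp add: cosh_field_def exp_minus field_simps)
  then show ?thesis by (simp add: norm_mult)
qed

lemma norm_cosh_bounds:
  fixes \<zeta> :: complex
  shows "cos (Im \<zeta>) * cosh (Re \<zeta>) \<le> norm (cosh \<zeta>)" "norm (cosh \<zeta>) \<le> cosh (Re \<zeta>)"
proof -
  have "Re (cosh \<zeta>) = cos (Im \<zeta>) * cosh (Re \<zeta>)"
    by (simp add: cosh_field_def Re_exp field_simps)
  then show "cos (Im \<zeta>) * cosh (Re \<zeta>) \<le> norm (cosh \<zeta>)" by (metis complex_Re_le_cmod)
  have "norm (exp \<zeta> + exp (-\<zeta>)) \<le> norm (exp \<zeta>) + norm (exp (-\<zeta>))"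
    by (rule norm_triangle_ineq)
  then show "norm (cosh \<zeta>) \<le> cosh (Re \<zeta>)" by (simp add: cosh_field_def)
qed

definition SE_weight :: "real \<Rightarrow> real \<Rightarrow> complex \<Rightarrow> real" where
  "SE_weight \<alpha> \<beta> \<zeta> = norm (1 + exp (-2*\<zeta>)) powr (-\<alpha>/2) * norm (1 + exp (2*\<zeta>)) powr (-\<beta>/2)"

lemma SE_weight_uminus: "SE_weight \<alpha> \<beta> (-\<zeta>) = SE_weight \<beta> \<alpha> \<zeta>"
  by (simp add: SE_weight_def mult.commute)

lemma SE_weight_of_real:
  "SE_weight \<alpha> \<beta> (complex_of_real x) = (1 + exp (-2*x)) powr (-\<alpha>/2) * (1 + exp (2*x)) powr (-\<beta>/2)"
proof -
  have "norm (1 + complex_of_real (exp y)) = 1 + exp y" for y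
    by (metis abs_of_pos add_pos_pos exp_gt_zero norm_of_real of_real_1 of_real_add zero_less_one)
  moreover have "exp (2 * complex_of_real x) = complex_of_real (exp (2 * x))"
    "exp (-2 * complex_of_real x) = complex_of_real (exp (-2 * x))"
    by (simp_all flip: exp_of_real)
  ultimately show ?thesis by (simp add: SE_weight_def)
qed

lemma SE_weight_eq_norm_cosh:
  "SE_weight \<alpha> \<beta> \<zeta> = (2 * norm (cosh \<zeta>) * exp (- Re \<zeta>)) powr (-\<alpha>/2)
                     * (2 * norm (cosh \<zeta>) * exp (Re \<zeta>)) powr (-\<beta>/2)"
  using norm_one_plus_exp_double[of \<zeta>] norm_one_plus_exp_double[of "-\<zeta>"]
  by (simp add: SE_weight_def)

lemma norm_cosh_mult_exp_bounds:
  fixes \<zeta> :: complex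
  assumes "Re \<zeta> \<le> 0" "0 < cd" "cd \<le> cos (Im \<zeta>)"
  shows "cd / 2 \<le> norm (cosh \<zeta>) * exp (Re \<zeta>)" "norm (cosh \<zeta>) * exp (Re \<zeta>) \<le> 1"
proof -
  define x where "x = Re \<zeta>"
  have cosh_exp: "cosh x * exp x = (1 + exp x ^ 2) / 2"
    by (simp add: cosh_field_def exp_minus power2_eq_square field_simps)
  have "exp x ^ 2 \<le> 1" using assms(1) by (simp add: x_def power_le_one)
  then have cosh_exp_bounds: "1/2 \<le> cosh x * exp x" "cosh x * exp x \<le> 1"
    unfolding cosh_exp by auto
  have "cd / 2 \<le> cos (Im \<zeta>) * cosh x * exp x"
    using assms(2,3) cosh_exp_bounds(1) mult_mono[of cd "cos (Im \<zeta>)" "1/2" "cosh x * exp x"]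
    by (simp add: mult.assoc)
  also have "\<dots> \<le> norm (cosh \<zeta>) * exp x"
    using norm_cosh_bounds(1)[of \<zeta>] by (simp add: x_def)
  finally show "cd / 2 \<le> norm (cosh \<zeta>) * exp (Re \<zeta>)" by (simp add: x_def)
  have "norm (cosh \<zeta>) * exp x \<le> cosh x * exp x"
    using norm_cosh_bounds(2)[of \<zeta>] by (simp add: x_def mult_right_mono)
  with cosh_exp_bounds(2) have "norm (cosh \<zeta>) * exp x \<le> 1" by linarith
  then show "norm (cosh \<zeta>) * exp (Re \<zeta>) \<le> 1" by (simp add: x_def)
qed

lemma norm_mult_cosh_le_SE_weight_left:
  fixes w \<zeta> :: complex and cd K p q :: real
  assumes "Re \<zeta> \<le> 0" "0 < cd" "cd \<le> cos (Im \<zeta>)" "0 \<le> K"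
    and w: "norm w \<le> K * norm (1 + sinh \<zeta> ^ 2) powr (-(p+1)/2)"
  shows "norm (w * cosh \<zeta>) \<le> 2 powr (max p q) * K / cd powr ((max p q - min p q)/2) * SE_weight p q \<zeta>"
proof -
  define c where "c = norm (cosh \<zeta>)"
  note bounds = norm_cosh_mult_exp_bounds[OF assms(1-3), folded c_def]
  have "0 < c * exp (Re \<zeta>)" using bounds(1) assms(2) by linarith
  then have "0 < c" by (simp add: zero_less_mult_iff)
  have "1 + sinh \<zeta> ^ 2 = cosh \<zeta> ^ 2" by (simp add: cosh_square_eq)
  then have "norm (1 + sinh \<zeta> ^ 2) = c powr 2"
    using \<open>0 < c\<close> by (simp add: c_def norm_power)
  moreover have "2 * (-(p+1)/2) = -p - 1" by simp
  ultimately have "norm (1 + sinh \<zeta> ^ 2) powr (-(p+1)/2) = c powr (-p - 1)"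
    by (simp only: powr_powr)
  also have "\<dots> = c powr (-p) / c"
    using \<open>0 < c\<close> by (simp add: powr_diff)
  finally have "norm (1 + sinh \<zeta> ^ 2) powr (-(p+1)/2) = c powr (-p) / c" .
  then have "norm (w * cosh \<zeta>) \<le> K * c powr (-p)"
    using mult_right_mono[OF w, of c] \<open>0 < c\<close> by (simp add: norm_mult c_def)
  also have "\<dots> \<le> K * (2 powr (max p q) / cd powr ((max p q - min p q) / 2)
           * ((2 * c * exp (- Re \<zeta>)) powr (-p/2) * (2 * c * exp (Re \<zeta>)) powr (-q/2)))"
    using powr_uminus_le_weight[OF \<open>0 < c\<close> assms(2) bounds] assms(4) by (rule mult_left_mono)
  finally show ?thesis by (simp add: SE_weight_eq_norm_cosh c_def mult_ac)
qed

lemma norm_mult_cosh_le_SE_weight: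
  fixes w \<zeta> :: complex and cd K \<alpha> \<beta> :: real
  assumes "0 < cd" "cd \<le> cos (Im \<zeta>)" "0 \<le> K"
    and left: "Re \<zeta> < 0 \<Longrightarrow> norm w \<le> K * norm (1 + sinh \<zeta> ^ 2) powr (-(\<alpha>+1)/2)"
    and right: "0 \<le> Re \<zeta> \<Longrightarrow> norm w \<le> K * norm (1 + sinh \<zeta> ^ 2) powr (-(\<beta>+1)/2)"
  shows "norm (w * cosh \<zeta>) \<le> 2 powr (max \<alpha> \<beta>) * K / cd powr ((max \<alpha> \<beta> - min \<alpha> \<beta>)/2) * SE_weight \<alpha> \<beta> \<zeta>"
proof (cases "Re \<zeta> < 0")
  case True
  then show ?thesis using norm_mult_cosh_le_SE_weight_left assms left by simp
next
  case False
  then have "norm (w * cosh (-\<zeta>)) \<le> 2 powr (max \<beta> \<alpha>) * K / cd powr ((max \<beta> \<alpha> - min \<beta> \<alpha>)/2) * SE_weight \<beta> \<alpha> (-\<zeta>)"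
    using assms right by (intro norm_mult_cosh_le_SE_weight_left) auto
  then show ?thesis by (simp add: SE_weight_uminus max.commute min.commute)
qed

theorem lemma1:
  fixes f :: "complex \<Rightarrow> complex" and d K \<alpha> \<beta> :: real
  assumes "0 < d" "d < pi/2"
    and "f analytic_on (sinh ` strip d)"
    and "K > 0" "\<alpha> > 0" "\<beta> > 0"
    and "\<forall>z \<in> sinh ` {\<zeta>\<in>strip d. Re \<zeta> < 0}. norm (f z) \<le> K * norm (1 + z^2) powr (-(\<alpha>+1)/2)"
    and "\<forall>z \<in> sinh ` {\<zeta>\<in>strip d. Re \<zeta> \<ge> 0}. norm (f z) \<le> K * norm (1 + z^2) powr (-(\<beta>+1)/2)"
  shows "(\<lambda>\<zeta>. f (sinh \<zeta>) * cosh \<zeta>) \<in>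
           LSE (2 powr (max \<alpha> \<beta>) * K / (cos d) powr ((max \<alpha> \<beta> - min \<alpha> \<beta>)/2))
               (2 powr (max \<alpha> \<beta>) * K) \<alpha> \<beta> d"
proof -
  have "(\<lambda>\<zeta>. f (sinh \<zeta>)) analytic_on strip d"
    by (rule analytic_on_compose[OF _ assms(3), unfolded comp_def]) (intro analytic_intros)
  then have analytic: "(\<lambda>\<zeta>. f (sinh \<zeta>) * cosh \<zeta>) analytic_on strip d"
    by (intro analytic_intros)
  have bound: "norm (f (sinh \<zeta>) * cosh \<zeta>)
      \<le> 2 powr (max \<alpha> \<beta>) * K / cd powr ((max \<alpha> \<beta> - min \<alpha> \<beta>)/2) * SE_weight \<alpha> \<beta> \<zeta>"
    if "\<zeta> \<in> strip d" "0 < cd" "cd \<le> cos (Im \<zeta>)" for \<zeta> cd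
    using that assms(4,7,8) by (intro norm_mult_cosh_le_SE_weight) auto
  have "cos d \<le> cos (Im \<zeta>)" if "\<zeta> \<in> strip d" for \<zeta>
    using that assms(1,2) cos_monotone_0_pi_le[where y = "\<bar>Im \<zeta>\<bar>" and x = d] by (simp add: strip_def)
  moreover have "0 < cos d" using assms(1,2) by (intro cos_gt_zero_pi) auto
  ultimately have "\<forall>\<zeta>\<in>strip d. norm (f (sinh \<zeta>) * cosh \<zeta>)
      \<le> 2 powr (max \<alpha> \<beta>) * K / cos d powr ((max \<alpha> \<beta> - min \<alpha> \<beta>)/2)
         * norm (1 + exp (-2*\<zeta>)) powr (-\<alpha>/2) * norm (1 + exp (2*\<zeta>)) powr (-\<beta>/2)"
    using bound by (simp add: SE_weight_def mult.assoc)
  moreover have "\<forall>x. norm (f (sinh (complex_of_real x)) * cosh (complex_of_real x))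
      \<le> 2 powr (max \<alpha> \<beta>) * K * (1 + exp (-2*x)) powr (-\<alpha>/2) * (1 + exp (2*x)) powr (-\<beta>/2)"
    using bound[where \<zeta> = "complex_of_real x" and cd = 1 for x] assms(1)
    by (simp add: strip_def SE_weight_of_real mult.assoc)
  ultimately show ?thesis using analytic by (simp add: LSE_def)
qed

end
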